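(* Let $\mathcal{C}$ be a class of languages that is closed under inverse injective alphabet morphisms (it is not assumed that $\mathcal{C}$ is closed under reversal). Then for every finitely generated group $G$ and every finite monoid generating set $A \subseteq G$: $\mathrm{wp}_A(G) \in \mathcal{C}$ if and only if $(\mathrm{wp}_A(G))^{\mathrm{rev}} \in \mathcal{C}$.
   Context: A language is a pair $(A,L)$ with $A$ a finite alphabet and $L \subseteq A^*$. An alphabet morphism is a map $h: A^* \to B^*$ ($A,B$ finite alphabets) with $h(uv) = h(u)h(v)$ for all $u,v$; it is injective if it is injective as a map. For $L \subseteq B^*$, $h^{-1}(L) = \{x \in A^* : h(x) \in L\}$. A class $\mathcal{C}$ is closed under inverse injective alphabet morphisms iff for every finite alphabet $B$, every $L \subseteq B^*$ in $\mathcal{C}$ and every injective alphabet morphism $h: A^* \to B^*$, $h^{-1}(L) \in \mathcal{C}$. A monoid generating set of $G$ is a subset $A\subseteq G$ such that every element of $G$ is a product of elements of $A$; $A$ is regarded as a finite alphabet and $\mathrm{wp}_A(G) = \{w \in A^* : w \text{ evaluates to the identity of } G\}$. $L^{\mathrm{rev}} = \{w^{\mathrm{rev}} : w \in L\}$ where $(a_1\cdots a_n)^{\mathrm{rev}} = a_n \cdots a_1$. *)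

theory Defs
  imports "HOL-Algebra.Group"
begin

text \<open>A language is a pair (A, L) with A a finite alphabet (a finite set of symbols
of type 'a) and L a set of words over A. A class of languages is a set of such pairs.\<close>

definition alph_morph :: "('a \<Rightarrow> 'b list) \<Rightarrow> 'a list \<Rightarrow> 'b list" where
  "alph_morph h w = concat (map h w)"

definition closed_inv_inj_morph :: "('a set \<times> 'a list set) set \<Rightarrow> bool" where
  "closed_inv_inj_morph C \<longleftrightarrow>
     (\<forall>A B L h. finite A \<and> finite B \<and> L \<subseteq> lists B \<and> (B, L) \<in> C \<and>
        (\<forall>a\<in>A. h a \<in> lists B) \<and> inj_on (alph_morph h) (lists A)
        \<longrightarrow> (A, {x \<in> lists A. alph_morph h x \<in> L}) \<in> C)"

definition word_eval :: "('g, 'm) monoid_scheme \<Rightarrow> 'g list \<Rightarrow> 'g" where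
  "word_eval G w = foldr (\<lambda>a b. a \<otimes>\<^bsub>G\<^esub> b) w \<one>\<^bsub>G\<^esub>"

definition monoid_gen_set :: "('g, 'm) monoid_scheme \<Rightarrow> 'g set \<Rightarrow> bool" where
  "monoid_gen_set G A \<longleftrightarrow> A \<subseteq> carrier G \<and>
     (\<forall>g\<in>carrier G. \<exists>w\<in>lists A. word_eval G w = g)"

definition word_problem :: "('g, 'm) monoid_scheme \<Rightarrow> 'g set \<Rightarrow> 'g list set" where
  "word_problem G A = {w \<in> lists A. word_eval G w = \<one>\<^bsub>G\<^esub>}"

definition lang_rev :: "'a list set \<Rightarrow> 'a list set" where
  "lang_rev L = rev ` L"

end

theory Submission
  imports Defs
begin

text \<open>Choose for every generator a a nonempty word h(a) over A that evaluates to the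
inverse of a, all these words having the same length. The induced morphism h sends x to a
word evaluating to the inverse of the value of rev x, so h pulls the word problem back to
its reversal, and rev \<circ> h pulls the reversal back to the word problem. A morphism mapping
distinct letters to distinct nonempty words of one fixed length is injective, because a
word in its image is cut into blocks unambiguously. A common length is reached by
prefixing a word u(a) for the inverse of a with copies of the identity word u(a) a.\<close>

lemma word_eval_Nil [simp]: "word_eval G [] = \<one>\<^bsub>G\<^esub>"
  by (simp add: word_eval_def)

lemma word_eval_Cons [simp]: "word_eval G (a # w) = a \<otimes>\<^bsub>G\<^esub> word_eval G w"
  by (simp add: word_eval_def)

lemma (in monoid) word_eval_closed:
  "set w \<subseteq> carrier G \<Longrightarrow> word_eval G w \<in> carrier G"
  by (induction w) auto

lemma (in monoid) word_eval_append:
  assumes "set u \<subseteq> carrier G" and "set v \<subseteq> carrier G"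
  shows "word_eval G (u @ v) = word_eval G u \<otimes> word_eval G v"
  using assms(1) by (induction u) (auto simp: m_assoc word_eval_closed assms(2))

lemma (in monoid) word_eval_concat_replicate:
  assumes "set w \<subseteq> carrier G"
  shows "word_eval G (concat (replicate n w)) = word_eval G w [^] n"
proof (induction n)
  case (Suc n)
  have "set (concat (replicate n w)) \<subseteq> carrier G"
    using assms by auto
  with Suc show ?case
    using assms nat_pow_Suc2[of "word_eval G w" n]
    by (simp add: word_eval_append word_eval_closed)
qed simp

lemma alph_morph_Nil [simp]: "alph_morph h [] = []"
  and alph_morph_Cons [simp]: "alph_morph h (a # x) = h a @ alph_morph h x"
  by (simp_all add: alph_morph_def)

lemma alph_morph_in_lists:
  "(\<And>a. a \<in> A \<Longrightarrow> h a \<in> lists B) \<Longrightarrow> x \<in> lists A \<Longrightarrow> alph_morph h x \<in> lists B"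
  by (induction x) auto

lemma closed_inv_inj_morphD:
  assumes "closed_inv_inj_morph C" and "(B, L) \<in> C"
    and "finite A" and "finite B" and "L \<subseteq> lists B"
    and "\<And>a. a \<in> A \<Longrightarrow> h a \<in> lists B" and "inj_on (alph_morph h) (lists A)"
  shows "(A, {x \<in> lists A. alph_morph h x \<in> L}) \<in> C"
  using assms unfolding closed_inv_inj_morph_def by blast

lemma alph_morph_rev_comp: "alph_morph (rev \<circ> h) x = rev (alph_morph h (rev x))"
  by (simp add: alph_morph_def rev_concat rev_map)

lemma inj_on_alph_morph_uniform_length:
  assumes len: "\<And>a. a \<in> A \<Longrightarrow> length (h a) = n"
    and nonempty: "\<And>a. a \<in> A \<Longrightarrow> h a \<noteq> []"
    and inj: "inj_on h A"
  shows "inj_on (alph_morph h) (lists A)"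
proof (rule inj_onI)
  show "x = y" if "x \<in> lists A" "y \<in> lists A" "alph_morph h x = alph_morph h y" for x y
    using that
  proof (induction x arbitrary: y rule: lists.induct)
    case Nil
    then show ?case
      using nonempty by (cases y) auto
  next
    case (Cons a x)
    then obtain b y' where y: "y = b # y'" and "b \<in> A" "y' \<in> lists A"
      using nonempty by (cases y) auto
    have "h a @ alph_morph h x = h b @ alph_morph h y'"
      using Cons.prems y by simp
    moreover have "length (h a) = length (h b)"
      using len Cons.hyps(1) \<open>b \<in> A\<close> by simp
    ultimately have "h a = h b" and "alph_morph h x = alph_morph h y'"
      by (simp_all add: append_eq_append_conv)
    then show ?case
      using Cons.IH Cons.hyps(1) y \<open>b \<in> A\<close> \<open>y' \<in> lists A\<close> inj_onD[OF inj] by simp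
  qed
qed

lemma (in group) word_eval_alph_morph_inverse:
  assumes "A \<subseteq> carrier G"
    and "\<And>a. a \<in> A \<Longrightarrow> h a \<in> lists A"
    and "\<And>a. a \<in> A \<Longrightarrow> word_eval G (h a) = inv a"
    and "x \<in> lists A"
  shows "word_eval G (alph_morph h x) = inv (word_eval G (rev x))"
  using assms(4)
proof (induction x)
  case (Cons a x)
  have a: "a \<in> carrier G" and x: "set x \<subseteq> carrier G"
    using Cons.hyps assms(1) by auto
  have "set (h a) \<subseteq> carrier G" and "set (alph_morph h x) \<subseteq> carrier G"
    using Cons.hyps assms(1,2) alph_morph_in_lists[of A h A x] by auto
  then have "word_eval G (alph_morph h (a # x)) = inv a \<otimes> inv (word_eval G (rev x))"
    using Cons assms(3) by (simp add: word_eval_append)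
  also have "\<dots> = inv (word_eval G (rev x @ [a]))"
    using a x by (simp add: word_eval_append word_eval_closed inv_mult_group)
  finally show ?case by simp
qed simp

lemma (in group) word_problem_vimage_inverse_morph:
  assumes "A \<subseteq> carrier G"
    and "\<And>a. a \<in> A \<Longrightarrow> h a \<in> lists A"
    and "\<And>a. a \<in> A \<Longrightarrow> word_eval G (h a) = inv a"
  shows "{x \<in> lists A. alph_morph h x \<in> word_problem G A} = lang_rev (word_problem G A)"
proof -
  have "alph_morph h x \<in> word_problem G A \<longleftrightarrow> rev x \<in> word_problem G A"
    if "x \<in> lists A" for x
  proof -
    have "word_eval G (rev x) \<in> carrier G"
      using that assms(1) word_eval_closed[of "rev x"] by auto
    then show ?thesis
      using that word_eval_alph_morph_inverse[OF assms that] alph_morph_in_lists[of A h A x] assms(2)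
      by (auto simp: word_problem_def)
  qed
  moreover have "x \<in> lang_rev (word_problem G A) \<longleftrightarrow> x \<in> lists A \<and> rev x \<in> word_problem G A" for x
    by (force simp: lang_rev_def word_problem_def)
  ultimately show ?thesis by blast
qed

lemma (in group) lang_rev_word_problem_vimage_rev_comp:
  assumes "A \<subseteq> carrier G"
    and "\<And>a. a \<in> A \<Longrightarrow> h a \<in> lists A"
    and "\<And>a. a \<in> A \<Longrightarrow> word_eval G (h a) = inv a"
  shows "{x \<in> lists A. alph_morph (rev \<circ> h) x \<in> lang_rev (word_problem G A)} = word_problem G A"
proof -
  have "alph_morph (rev \<circ> h) x \<in> lang_rev (word_problem G A) \<longleftrightarrow> x \<in> word_problem G A"
    if "x \<in> lists A" for x
  proof -
    have "alph_morph (rev \<circ> h) x \<in> lang_rev (word_problem G A)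
        \<longleftrightarrow> alph_morph h (rev x) \<in> word_problem G A"
      by (simp add: alph_morph_rev_comp lang_rev_def image_iff)
    also have "\<dots> \<longleftrightarrow> rev x \<in> lang_rev (word_problem G A)"
      using that word_problem_vimage_inverse_morph[OF assms] by auto
    finally show ?thesis
      by (simp add: lang_rev_def image_iff)
  qed
  then show ?thesis
    by (auto simp: word_problem_def)
qed

lemma (in group) nonempty_word_eval_inv:
  assumes "monoid_gen_set G A" and "a \<in> A"
  shows "\<exists>w \<in> lists A. w \<noteq> [] \<and> word_eval G w = inv a"
proof -
  have a: "a \<in> carrier G"
    using assms by (auto simp: monoid_gen_set_def)
  then obtain w where w: "w \<in> lists A" "word_eval G w = inv a"
    using assms(1) unfolding monoid_gen_set_def by (meson inv_closed)
  show ?thesis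
  proof (cases "w = []")
    case True
    with w have "inv a = \<one>"
      by simp
    with a have "word_eval G [a] = inv a"
      by simp
    with assms(2) show ?thesis by (intro bexI[of _ "[a]"]) auto
  qed (use w in blast)
qed

lemma (in group) uniform_length_inverse_words:
  assumes "finite A" and "A \<subseteq> carrier G"
    and u: "\<And>a. a \<in> A \<Longrightarrow> u a \<in> lists A \<and> u a \<noteq> [] \<and> word_eval G (u a) = inv a"
  obtains h n where "\<And>a. a \<in> A \<Longrightarrow> h a \<in> lists A"
    and "\<And>a. a \<in> A \<Longrightarrow> length (h a) = n"
    and "\<And>a. a \<in> A \<Longrightarrow> h a \<noteq> []"
    and "\<And>a. a \<in> A \<Longrightarrow> word_eval G (h a) = inv a"
proof -
  define p where "p a = Suc (length (u a))" for a
  define P where "P = (\<Prod>a\<in>A. p a)"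
  define h where "h a = concat (replicate (P div p a - 1) (u a @ [a])) @ u a" for a
  have "h a \<in> lists A" if "a \<in> A" for a
    using u[OF that] that by (auto simp: h_def split: if_splits)
  moreover have "length (h a) = P - 1" if a: "a \<in> A" for a
  proof -
    obtain q where q: "P = p a * q"
      using dvd_prodI[OF assms(1) a] unfolding P_def by blast
    moreover have "P > 0"
      unfolding P_def p_def by (simp add: prod_pos)
    ultimately obtain r where r: "q = Suc r"
      by (cases q) auto
    have "P div p a = q"
      using q by (simp add: p_def del: mult_Suc)
    with q r show ?thesis
      by (simp add: h_def p_def length_concat sum_list_replicate algebra_simps)
  qed
  moreover have "h a \<noteq> []" if "a \<in> A" for a
    using u[OF that] by (simp add: h_def)
  moreover have "word_eval G (h a) = inv a" if a: "a \<in> A" for a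
  proof -
    have "a \<in> carrier G" and ua: "set (u a) \<subseteq> carrier G"
      using a u[OF a] assms(2) by auto
    then have "word_eval G (u a @ [a]) = \<one>"
      using u[OF a] by (simp add: word_eval_append)
    then have "word_eval G (concat (replicate (P div p a - 1) (u a @ [a]))) = \<one>"
      using ua \<open>a \<in> carrier G\<close> by (simp add: word_eval_concat_replicate)
    then show ?thesis
      using ua u[OF a] \<open>a \<in> carrier G\<close>
      by (simp add: h_def word_eval_append)
  qed
  ultimately show ?thesis
    using that by blast
qed

lemma (in group) inverse_morph_exists:
  assumes "finite A" and "monoid_gen_set G A"
  obtains h where "\<And>a. a \<in> A \<Longrightarrow> h a \<in> lists A"
    and "\<And>a. a \<in> A \<Longrightarrow> word_eval G (h a) = inv a"
    and "inj_on (alph_morph h) (lists A)"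
    and "inj_on (alph_morph (rev \<circ> h)) (lists A)"
proof -
  have A: "A \<subseteq> carrier G"
    using assms(2) by (simp add: monoid_gen_set_def)
  obtain u where "\<And>a. a \<in> A \<Longrightarrow> u a \<in> lists A \<and> u a \<noteq> [] \<and> word_eval G (u a) = inv a"
    using nonempty_word_eval_inv[OF assms(2)] by metis
  then obtain h n where h: "\<And>a. a \<in> A \<Longrightarrow> h a \<in> lists A"
    and len: "\<And>a. a \<in> A \<Longrightarrow> length (h a) = n"
    and nonempty: "\<And>a. a \<in> A \<Longrightarrow> h a \<noteq> []"
    and ev: "\<And>a. a \<in> A \<Longrightarrow> word_eval G (h a) = inv a"
    using uniform_length_inverse_words[OF assms(1) A] by blast
  have "inj_on h A"
    using A ev by (intro inj_onI) (metis inv_inv subsetD)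
  then have "inj_on (rev \<circ> h) A"
    by (auto simp: inj_on_def)
  moreover have "length ((rev \<circ> h) a) = n" "(rev \<circ> h) a \<noteq> []" if "a \<in> A" for a
    using len[OF that] nonempty[OF that] by simp_all
  ultimately show ?thesis
    using that[OF h ev] inj_on_alph_morph_uniform_length len nonempty \<open>inj_on h A\<close>
    by blast
qed

theorem proposition2p7:
  fixes C :: "('g set \<times> 'g list set) set"
    and G :: "('g, 'm) monoid_scheme"
    and A :: "'g set"
  assumes "closed_inv_inj_morph C"
    and "group G"
    and "finite A"
    and "monoid_gen_set G A"
  shows "(A, word_problem G A) \<in> C \<longleftrightarrow> (A, lang_rev (word_problem G A)) \<in> C"
proof -
  interpret group G by fact
  have A: "A \<subseteq> carrier G"
    using assms(4) by (simp add: monoid_gen_set_def)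
  obtain h where h: "\<And>a. a \<in> A \<Longrightarrow> h a \<in> lists A"
    and ev: "\<And>a. a \<in> A \<Longrightarrow> word_eval G (h a) = inv\<^bsub>G\<^esub> a"
    and inj: "inj_on (alph_morph h) (lists A)"
    and inj_rev: "inj_on (alph_morph (rev \<circ> h)) (lists A)"
    using inverse_morph_exists[OF assms(3,4)] by blast
  have h_rev: "(rev \<circ> h) a \<in> lists A" if "a \<in> A" for a
    using h[OF that] by auto
  have "word_problem G A \<subseteq> lists A" and "lang_rev (word_problem G A) \<subseteq> lists A"
    by (auto simp: word_problem_def lang_rev_def)
  note pull_back = closed_inv_inj_morphD[OF assms(1) _ assms(3,3)]
  show ?thesis
  proof
    assume "(A, word_problem G A) \<in> C"
    from pull_back[OF this \<open>word_problem G A \<subseteq> lists A\<close> h inj]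
    show "(A, lang_rev (word_problem G A)) \<in> C"
      by (simp add: word_problem_vimage_inverse_morph[OF A h ev])
  next
    assume "(A, lang_rev (word_problem G A)) \<in> C"
    from pull_back[OF this \<open>lang_rev (word_problem G A) \<subseteq> lists A\<close> h_rev inj_rev]
    show "(A, word_problem G A) \<in> C"
      by (simp add: lang_rev_word_problem_vimage_rev_comp[OF A h ev])
  qed
qed

end
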